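(* Let $\pi$ be a projective plane of order $q$, let $2\le n\le q$, and let $\phi$ be an embedding of the complete bipartite graph $K_{n,q}$ into $\pi$, where $U$ and $V$ are the two classes of $K_{n,q}$ with $|U|=n$ and $|V|=q$. Then the points of $\phi(U)$ are collinear.
   Context: A finite projective plane of order $q$ has $q^2+q+1$ points and lines, $q+1$ points on each line and $q+1$ lines through each point; any two distinct points lie on a unique line and any two lines meet in a unique point. An embedding of a simple graph $G=(V,E)$ into a projective plane is an injective map $\phi$ from $V$ to the points such that the induced map sending an edge $ab$ to the line through $\phi(a),\phi(b)$ is injective on $E$. *)

theory Defs
  imports Main
begin

definition projective_plane ::
  "'p set \<Rightarrow> 'l set \<Rightarrow> ('p \<Rightarrow> 'l \<Rightarrow> bool) \<Rightarrow> nat \<Rightarrow> bool" where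
  "projective_plane P L inc q \<longleftrightarrow>
     finite P \<and> finite L \<and>
     card P = q^2 + q + 1 \<and> card L = q^2 + q + 1 \<and>
     (\<forall>l\<in>L. card {p\<in>P. inc p l} = q + 1) \<and>
     (\<forall>p\<in>P. card {l\<in>L. inc p l} = q + 1) \<and>
     (\<forall>p\<in>P. \<forall>p'\<in>P. p \<noteq> p' \<longrightarrow> (\<exists>!l. l \<in> L \<and> inc p l \<and> inc p' l)) \<and>
     (\<forall>l\<in>L. \<forall>l'\<in>L. l \<noteq> l' \<longrightarrow> (\<exists>!p. p \<in> P \<and> inc p l \<and> inc p l'))"

definition edge_line ::
  "'l set \<Rightarrow> ('p \<Rightarrow> 'l \<Rightarrow> bool) \<Rightarrow> ('v \<Rightarrow> 'p) \<Rightarrow> 'v set \<Rightarrow> 'l" where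
  "edge_line L inc \<phi> e = (THE l. l \<in> L \<and> (\<forall>x\<in>e. inc (\<phi> x) l))"

text \<open>Embedding of a simple graph (V, E), edges being 2-element subsets of V.\<close>
definition graph_embedding ::
  "'p set \<Rightarrow> 'l set \<Rightarrow> ('p \<Rightarrow> 'l \<Rightarrow> bool) \<Rightarrow> 'v set \<Rightarrow> 'v set set \<Rightarrow> ('v \<Rightarrow> 'p) \<Rightarrow> bool" where
  "graph_embedding P L inc V E \<phi> \<longleftrightarrow>
     inj_on \<phi> V \<and> \<phi> ` V \<subseteq> P \<and> inj_on (edge_line L inc \<phi>) E"

definition complete_bipartite_edges :: "'v set \<Rightarrow> 'v set \<Rightarrow> 'v set set" where
  "complete_bipartite_edges U W = {{u, w} | u w. u \<in> U \<and> w \<in> W}"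

end

theory Submission
  imports Defs
begin

text \<open>Fix \<open>u\<^sub>0 \<in> U\<close>. The \<open>q\<close> edges \<open>u\<^sub>0v\<close>, \<open>v \<in> V\<close>, are sent to \<open>q\<close> distinct lines
  through \<open>\<phi> u\<^sub>0\<close>, leaving exactly one line \<open>m\<close> of the \<open>q + 1\<close> lines through that point.
  For another \<open>u \<in> U\<close>, the line through \<open>\<phi> u\<^sub>0\<close> and \<open>\<phi> u\<close> cannot pass through any
  \<open>\<phi> v\<close>: then the edges \<open>u\<^sub>0v\<close> and \<open>uv\<close> would be sent to the same line. Hence it is \<open>m\<close>.\<close>

definition pencil :: "'l set \<Rightarrow> ('p \<Rightarrow> 'l \<Rightarrow> bool) \<Rightarrow> 'p \<Rightarrow> 'l set" where
  "pencil L inc p = {l \<in> L. inc p l}"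

lemma projective_plane_finite_lines:
  "projective_plane P L inc q \<Longrightarrow> finite L"
  by (simp add: projective_plane_def)

lemma card_pencil:
  "projective_plane P L inc q \<Longrightarrow> p \<in> P \<Longrightarrow> card (pencil L inc p) = q + 1"
  by (simp add: projective_plane_def pencil_def)

lemma projective_plane_ex1_join:
  "projective_plane P L inc q \<Longrightarrow> a \<in> P \<Longrightarrow> b \<in> P \<Longrightarrow> a \<noteq> b
    \<Longrightarrow> \<exists>!l. l \<in> L \<and> inc a l \<and> inc b l"
  by (simp add: projective_plane_def)

lemma pencil_diff_injective_image:
  assumes "projective_plane P L inc q" "p \<in> P"
    and "finite V" "card V = q" "inj_on f V" "f ` V \<subseteq> pencil L inc p"
  obtains m where "pencil L inc p - f ` V = {m}"
proof -
  have "finite (pencil L inc p)"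
    using projective_plane_finite_lines[OF assms(1)] unfolding pencil_def by simp
  then have "card (pencil L inc p - f ` V) = 1"
    using card_pencil[OF assms(1,2)] card_image[OF assms(5)] assms(4,6)
    by (simp add: card_Diff_subset finite_subset)
  then show ?thesis
    using that by (auto simp: card_1_singleton_iff)
qed

lemma embedding_ex1_edge_line:
  assumes "projective_plane P L inc q" "graph_embedding P L inc V E \<phi>"
    and "x \<in> V" "y \<in> V" "x \<noteq> y"
  shows "\<exists>!l. l \<in> L \<and> inc (\<phi> x) l \<and> inc (\<phi> y) l"
  using assms(2-5) unfolding graph_embedding_def
  by (intro projective_plane_ex1_join[OF assms(1)]) (auto dest: inj_onD)

lemma embedding_edge_line:
  assumes "projective_plane P L inc q" "graph_embedding P L inc V E \<phi>"
    and "x \<in> V" "y \<in> V" "x \<noteq> y"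
  shows "edge_line L inc \<phi> {x, y} \<in> L \<and> inc (\<phi> x) (edge_line L inc \<phi> {x, y})
           \<and> inc (\<phi> y) (edge_line L inc \<phi> {x, y})"
proof -
  have "\<exists>!l. l \<in> L \<and> (\<forall>z\<in>{x, y}. inc (\<phi> z) l)"
    using embedding_ex1_edge_line[OF assms] by simp
  then have "edge_line L inc \<phi> {x, y} \<in> L \<and> (\<forall>z\<in>{x, y}. inc (\<phi> z) (edge_line L inc \<phi> {x, y}))"
    unfolding edge_line_def by (rule theI')
  then show ?thesis
    by simp
qed

lemma embedding_edge_line_eqI:
  assumes "projective_plane P L inc q" "graph_embedding P L inc V E \<phi>"
    and "x \<in> V" "y \<in> V" "x \<noteq> y"
    and "l \<in> L" "inc (\<phi> x) l" "inc (\<phi> y) l"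
  shows "edge_line L inc \<phi> {x, y} = l"
  using embedding_ex1_edge_line[OF assms(1-5)] embedding_edge_line[OF assms(1-5)] assms(6-8)
  by blast

lemma embedding_adjacent_edges_not_collinear:
  assumes plane: "projective_plane P L inc q"
    and emb: "graph_embedding P L inc V E \<phi>"
    and edges: "{a, c} \<in> E" "{b, c} \<in> E"
    and vertices: "a \<in> V" "b \<in> V" "c \<in> V" "a \<noteq> b" "a \<noteq> c" "b \<noteq> c"
    and "l \<in> L"
  shows "\<not> (inc (\<phi> a) l \<and> inc (\<phi> b) l \<and> inc (\<phi> c) l)"
proof
  assume "inc (\<phi> a) l \<and> inc (\<phi> b) l \<and> inc (\<phi> c) l"
  then have "edge_line L inc \<phi> {a, c} = edge_line L inc \<phi> {b, c}"
    using embedding_edge_line_eqI[OF plane emb] vertices \<open>l \<in> L\<close> by metis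
  then have "{a, c} = {b, c}"
    using emb edges unfolding graph_embedding_def by (auto dest: inj_onD)
  then show False
    using vertices by (auto simp: doubleton_eq_iff)
qed

lemma complete_bipartite_edgesI:
  "u \<in> U \<Longrightarrow> w \<in> W \<Longrightarrow> {u, w} \<in> complete_bipartite_edges U W"
  unfolding complete_bipartite_edges_def by blast

lemma complete_bipartite_embedding_inj_star:
  assumes "graph_embedding P L inc (U \<union> V) (complete_bipartite_edges U V) \<phi>"
    and "U \<inter> V = {}" "u\<^sub>0 \<in> U"
  shows "inj_on (\<lambda>v. edge_line L inc \<phi> {u\<^sub>0, v}) V"
proof
  fix v w assume "v \<in> V" "w \<in> V"
    and "edge_line L inc \<phi> {u\<^sub>0, v} = edge_line L inc \<phi> {u\<^sub>0, w}"
  then have "{u\<^sub>0, v} = {u\<^sub>0, w}"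
    using assms(1) complete_bipartite_edgesI[OF \<open>u\<^sub>0 \<in> U\<close>] unfolding graph_embedding_def
    by (auto dest: inj_onD)
  then show "v = w"
    using \<open>v \<in> V\<close> \<open>w \<in> V\<close> assms(2,3) by (auto simp: doubleton_eq_iff)
qed

lemma complete_bipartite_embedding_join_not_star:
  assumes plane: "projective_plane P L inc q"
    and emb: "graph_embedding P L inc (U \<union> V) (complete_bipartite_edges U V) \<phi>"
    and "U \<inter> V = {}" "u\<^sub>0 \<in> U" "u \<in> U" "u \<noteq> u\<^sub>0" "v \<in> V"
  shows "edge_line L inc \<phi> {u\<^sub>0, u} \<noteq> edge_line L inc \<phi> {u\<^sub>0, v}"
proof
  have vertices: "u\<^sub>0 \<in> U \<union> V" "u \<in> U \<union> V" "v \<in> U \<union> V" "u\<^sub>0 \<noteq> v" "u \<noteq> v"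
    using assms(3-7) by auto
  assume same: "edge_line L inc \<phi> {u\<^sub>0, u} = edge_line L inc \<phi> {u\<^sub>0, v}"
  then show False
    using embedding_edge_line[OF plane emb] embedding_adjacent_edges_not_collinear[OF plane emb
        complete_bipartite_edgesI[OF \<open>u\<^sub>0 \<in> U\<close> \<open>v \<in> V\<close>]
        complete_bipartite_edgesI[OF \<open>u \<in> U\<close> \<open>v \<in> V\<close>] vertices(1-3)]
      vertices \<open>u \<noteq> u\<^sub>0\<close> by metis
qed

theorem lemma3p4:
  fixes P :: "'p set" and L :: "'l set" and inc :: "'p \<Rightarrow> 'l \<Rightarrow> bool"
    and U V :: "'v set" and \<phi> :: "'v \<Rightarrow> 'p" and q n :: nat
  assumes "projective_plane P L inc q"
    and "2 \<le> n" and "n \<le> q"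
    and "finite U" and "finite V" and "U \<inter> V = {}"
    and "card U = n" and "card V = q"
    and "graph_embedding P L inc (U \<union> V) (complete_bipartite_edges U V) \<phi>"
  shows "\<exists>l\<in>L. \<forall>u\<in>U. inc (\<phi> u) l"
proof -
  note plane = assms(1) and emb = assms(9)
  obtain u\<^sub>0 where "u\<^sub>0 \<in> U"
    using assms(2,7) by fastforce
  have in_pencil: "edge_line L inc \<phi> {u\<^sub>0, x} \<in> pencil L inc (\<phi> u\<^sub>0)
      \<and> inc (\<phi> x) (edge_line L inc \<phi> {u\<^sub>0, x})" if "x \<in> U \<union> V" "x \<noteq> u\<^sub>0" for x
    using embedding_edge_line[OF plane emb] \<open>u\<^sub>0 \<in> U\<close> that unfolding pencil_def by blast
  have "\<phi> u\<^sub>0 \<in> P"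
    using emb \<open>u\<^sub>0 \<in> U\<close> unfolding graph_embedding_def by blast
  moreover have "(\<lambda>v. edge_line L inc \<phi> {u\<^sub>0, v}) ` V \<subseteq> pencil L inc (\<phi> u\<^sub>0)"
    using in_pencil \<open>u\<^sub>0 \<in> U\<close> assms(6) by blast
  ultimately obtain m where m: "pencil L inc (\<phi> u\<^sub>0) - (\<lambda>v. edge_line L inc \<phi> {u\<^sub>0, v}) ` V = {m}"
    using pencil_diff_injective_image[OF plane _ assms(5,8)]
      complete_bipartite_embedding_inj_star[OF emb assms(6) \<open>u\<^sub>0 \<in> U\<close>] by metis
  have "edge_line L inc \<phi> {u\<^sub>0, u} = m" if "u \<in> U" "u \<noteq> u\<^sub>0" for u
    using in_pencil[of u] complete_bipartite_embedding_join_not_star[OF plane emb assms(6) \<open>u\<^sub>0 \<in> U\<close>]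
      m that by blast
  then have "\<forall>u\<in>U. inc (\<phi> u) m"
    using in_pencil m unfolding pencil_def by blast
  then show ?thesis
    using m unfolding pencil_def by blast
qed

end
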